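(* Let $(\mathbf k((G)),l)$ be a series field with prelogarithmic section, $\psi$ a morphism from $(\mathbf k((G)),l)$ to itself and $H$ a subgroup of $G$ such that $(\mathrm{Comp}_H)$: $\psi(h)=l(h)$ for every $h\in H$ with $l(h)\in G$. Then for every $h\in H$ with $l(h)\in G$ and every $k\in\mathbf k$: (1) $\psi^{EL}(\mathrm{Exp}(k\cdot h))=\mathrm{Exp}(k\cdot\mathrm{Log}(h))$; (2) if $\psi^{EL}$ is surjective, then $(\psi^{EL})^{-1}(\mathrm{Exp}(k\cdot\mathrm{Log}(h)))\in H\cdot\mathrm{Exp}\,\mathbf k((H^{>1}))$.
   Context: Let $\mathbf k$ be an ordered field with an order-preserving group isomorphism $\log:(\mathbf k^{>0},\cdot)\to(\mathbf k,+)$, and $(G,\cdot,<)$ a totally ordered abelian group (written multiplicatively). $\mathbf k((G))$ denotes the field of generalized power series $\alpha=\sum_{g\in G}\alpha(g)\,g$ ($\alpha(g)\in\mathbf k$) with anti-well-ordered support, usual operations, canonical valuation $v(\alpha)=\max\operatorname{supp}\alpha$ and ordering $\alpha>0$ iff $\alpha(v(\alpha))>0$; $\mathbf k$, $G$ are identified with subsets of $\mathbf k((G))$ (so "$l(h)\in G$" means $l(h)$ is a monomial with coefficient $1$). For $S\subseteq G$, $\mathbf k((S))=\{\alpha:\operatorname{supp}\alpha\subseteq S\}$; $H^{>1}=\{h\in H:h>1\}$. A prelogarithmic section is an order-preserving group embedding $l:(G,\cdot)\to(\mathbf k((G^{>1})),+)$. Exponential extension: $G^\#$ is the ordered abelian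 group of formal symbols $e(\alpha)$, $\alpha\in\mathbf k((G^{>1}))$, with $e(\alpha)e(\beta)=e(\alpha+\beta)$, $e(\alpha)<e(\beta)\iff\alpha<\beta$, and $e(l(g))$ identified with $g\in G$; $l^\#(e(\alpha))=\alpha$ is a prelogarithmic section of $\mathbf k((G^\#))$ extending $l$. Iterating gives $G^{\#n}$, $l^{\#n}$; the EL-series field $\mathbf k((G))^{EL}=\bigcup_n\mathbf k((G^{\#n}))$ carries the logarithm $\mathrm{Log}$ (union of the associated prelogarithms $L(g\,a(1+\varepsilon))=l(g)+\log a+\sum_{i\ge1}(-1)^{i-1}\varepsilon^i/i$), a bijection from positive elements onto the field, and $\mathrm{Exp}=\mathrm{Log}^{-1}$. An order-preserving group embedding $\psi:G\to G$, extended to $\mathbf k((G))$ by $\psi(\sum a_gg)=\sum a_g\psi(g)$, is a morphism of $(\mathbf k((G)),l)$ to itself if $\psi\circ l=l\circ\psi$ on $G$; it induces $\psi^\#=(l^\#)^{-1}\circ\psi\circ l^\#$ on $G^\#$, iterates $\psi^{\#n}$, and $\psi^{EL}=\bigcup_n\psi^{\#n}$. *)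

theory Defs
  imports Main
begin

text \<open>
The exponential-logarithmic group G^EL (the union of the tower
G = G^#0 \<subseteq> G^#1 \<subseteq> G^#2 \<subseteq> ...) is modelled as a family of subgroups
Gs n of an ordered abelian group type 'u, WRITTEN ADDITIVELY
(so the neutral element 1 of the paper is 0, products of monomials g h are
g + h, and "g > 1" becomes "g > 0").
\<close>

type_synonym ('u,'k) ser = "'u \<Rightarrow> 'k"

definition supp :: "('u,'k::zero) ser \<Rightarrow> 'u set" where
  "supp a = {x. a x \<noteq> 0}"

definition anti_wo :: "'u::linorder set \<Rightarrow> bool" where
  "anti_wo S \<longleftrightarrow> (\<forall>A. A \<subseteq> S \<and> A \<noteq> {} \<longrightarrow> (\<exists>m\<in>A. \<forall>a\<in>A. a \<le> m))"

definition Ser :: "'u::linorder set \<Rightarrow> ('u,'k::zero) ser set" where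
  "Ser S = {a. supp a \<subseteq> S \<and> anti_wo (supp a)}"

definition pos_part :: "'u::linordered_ab_group_add set \<Rightarrow> 'u set" where
  "pos_part S = {g\<in>S. 0 < g}"

definition smon :: "'u \<Rightarrow> ('u,'k::{zero,one}) ser" where
  "smon g = (\<lambda>x. if x = g then 1 else 0)"

definition sadd :: "('u,'k::plus) ser \<Rightarrow> ('u,'k) ser \<Rightarrow> ('u,'k) ser" where
  "sadd a b = (\<lambda>x. a x + b x)"

definition sdiff :: "('u,'k::minus) ser \<Rightarrow> ('u,'k) ser \<Rightarrow> ('u,'k) ser" where
  "sdiff a b = (\<lambda>x. a x - b x)"

definition sscale :: "'k::times \<Rightarrow> ('u,'k) ser \<Rightarrow> ('u,'k) ser" where
  "sscale c a = (\<lambda>x. c * a x)"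

text \<open>product of series (Cauchy product; for anti-well-ordered supports the
  index set is finite)\<close>
definition smul :: "('u::ab_group_add,'k::comm_ring_1) ser \<Rightarrow> ('u,'k) ser \<Rightarrow> ('u,'k) ser" where
  "smul a b = (\<lambda>x. \<Sum>y\<in>{y. a y \<noteq> 0 \<and> b (x - y) \<noteq> 0}. a y * b (x - y))"

fun spow :: "('u::ab_group_add,'k::comm_ring_1) ser \<Rightarrow> nat \<Rightarrow> ('u,'k) ser" where
  "spow a 0 = smon 0"
| "spow a (Suc n) = smul a (spow a n)"

definition lead :: "('u::linorder,'k::zero) ser \<Rightarrow> 'u" where
  "lead a = (THE m. m \<in> supp a \<and> (\<forall>x\<in>supp a. x \<le> m))"

definition spos :: "('u::linorder,'k::linordered_field) ser \<Rightarrow> bool" where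
  "spos a \<longleftrightarrow> supp a \<noteq> {} \<and> a (lead a) > 0"

definition sless :: "('u::linorder,'k::linordered_field) ser \<Rightarrow> ('u,'k) ser \<Rightarrow> bool" where
  "sless a b \<longleftrightarrow> spos (sdiff b a)"

text \<open>extension of a map on monomials to series:
  psi(\<Sum> a_g g) = \<Sum> a_g psi(g)\<close>
definition smap :: "('u \<Rightarrow> 'u) \<Rightarrow> ('u,'k::comm_monoid_add) ser \<Rightarrow> ('u,'k) ser" where
  "smap f a = (\<lambda>y. \<Sum>x\<in>{x. a x \<noteq> 0 \<and> f x = y}. a x)"

text \<open>sum of a family of series indexed by nat (summable families:
  pointwise finite sums)\<close>
definition sfam_sum :: "(nat \<Rightarrow> ('u,'k::comm_monoid_add) ser) \<Rightarrow> ('u,'k) ser" where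
  "sfam_sum F = (\<lambda>x. \<Sum>i\<in>{i. F i x \<noteq> 0}. F i x)"

definition subgrp :: "'u::ab_group_add set \<Rightarrow> bool" where
  "subgrp S \<longleftrightarrow> 0 \<in> S \<and> (\<forall>x\<in>S. \<forall>y\<in>S. x + y \<in> S) \<and> (\<forall>x\<in>S. - x \<in> S)"

definition ser_embedding ::
  "'u::linordered_ab_group_add set \<Rightarrow> ('u \<Rightarrow> ('u,'k::linordered_field) ser) \<Rightarrow> bool" where
  "ser_embedding S L \<longleftrightarrow>
     (\<forall>x\<in>S. \<forall>y\<in>S. L (x + y) = sadd (L x) (L y)) \<and>
     (\<forall>x\<in>S. \<forall>y\<in>S. x < y \<longrightarrow> sless (L x) (L y))"

definition field_log :: "('k::linordered_field \<Rightarrow> 'k) \<Rightarrow> bool" where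
  "field_log lg \<longleftrightarrow> bij_betw lg {0<..} UNIV \<and>
     (\<forall>a>0. \<forall>b>0. lg (a * b) = lg a + lg b) \<and>
     (\<forall>a>0. \<forall>b>0. a < b \<longrightarrow> lg a < lg b)"

text \<open>The exponential tower:  Gs 0 = G with prelogarithmic section l = L on G;
  Gs (n+1) = G^{#(n+1)}, and L restricted to Gs (n+1) is l^{#(n+1)}, an order
  preserving group isomorphism of Gs (n+1) onto k((Gs n^{>1})), extending
  l^{#n} (the identification e(l^{#n}(g)) = g is the inclusion Gs n \<subseteq> Gs (n+1)).\<close>
definition EL_tower ::
  "(nat \<Rightarrow> 'u::linordered_ab_group_add set) \<Rightarrow> ('u \<Rightarrow> ('u,'k::linordered_field) ser) \<Rightarrow> bool" where
  "EL_tower Gs L \<longleftrightarrow>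
     (\<forall>n. subgrp (Gs n)) \<and>
     (\<forall>n. Gs n \<subseteq> Gs (Suc n)) \<and>
     (L ` Gs 0 \<subseteq> Ser (pos_part (Gs 0)) \<and> ser_embedding (Gs 0) L) \<and>
     (\<forall>n. bij_betw L (Gs (Suc n)) (Ser (pos_part (Gs n))) \<and> ser_embedding (Gs (Suc n)) L)"

definition ELF :: "(nat \<Rightarrow> 'u::linorder set) \<Rightarrow> ('u,'k::zero) ser set" where
  "ELF Gs = (\<Union>n. Ser (Gs n))"

text \<open>The logarithm: Log(g a (1+eps)) = L(g) + log a + \<Sum>_{i\<ge>1} (-1)^{i-1} eps^i / i,
  where g = v(alpha), a = alpha(g) and eps = a^{-1} g^{-1} alpha - 1.\<close>
definition eps_part :: "('u::linordered_ab_group_add,'k::linordered_field) ser \<Rightarrow> ('u,'k) ser" where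
  "eps_part \<alpha> = sdiff (sscale (inverse (\<alpha> (lead \<alpha>))) (smul (smon (- lead \<alpha>)) \<alpha>)) (smon 0)"

definition Log ::
  "('k::linordered_field \<Rightarrow> 'k) \<Rightarrow> ('u::linordered_ab_group_add \<Rightarrow> ('u,'k) ser) \<Rightarrow> ('u,'k) ser \<Rightarrow> ('u,'k) ser" where
  "Log lg L \<alpha> =
     sadd (sadd (L (lead \<alpha>)) (sscale (lg (\<alpha> (lead \<alpha>))) (smon 0)))
          (sfam_sum (\<lambda>i. if i = 0 then (\<lambda>_. 0)
                          else sscale ((-1) ^ (i - 1) / of_nat i) (spow (eps_part \<alpha>) i)))"

text \<open>Exp = Log^{-1}, Log being a bijection from the positive elements of the
  EL-field onto the EL-field\<close>
definition Exp ::
  "('k::linordered_field \<Rightarrow> 'k) \<Rightarrow> (nat \<Rightarrow> 'u::linordered_ab_group_add set) \<Rightarrow> ('u \<Rightarrow> ('u,'k) ser) \<Rightarrow> ('u,'k) ser \<Rightarrow> ('u,'k) ser" where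
  "Exp lg Gs L = inv_into {\<alpha>\<in>ELF Gs. spos \<alpha>} (Log lg L)"

definition morphism ::
  "'u::linordered_ab_group_add set \<Rightarrow> ('u \<Rightarrow> ('u,'k::linordered_field) ser) \<Rightarrow> ('u \<Rightarrow> 'u) \<Rightarrow> bool" where
  "morphism G L \<psi> \<longleftrightarrow>
     \<psi> ` G \<subseteq> G \<and>
     (\<forall>x\<in>G. \<forall>y\<in>G. \<psi> (x + y) = \<psi> x + \<psi> y) \<and>
     (\<forall>x\<in>G. \<forall>y\<in>G. x < y \<longrightarrow> \<psi> x < \<psi> y) \<and>
     (\<forall>g\<in>G. L (\<psi> g) = smap \<psi> (L g))"

fun psi_sharp ::
  "(nat \<Rightarrow> 'u set) \<Rightarrow> ('u \<Rightarrow> ('u,'k::comm_monoid_add) ser) \<Rightarrow> ('u \<Rightarrow> 'u) \<Rightarrow> nat \<Rightarrow> 'u \<Rightarrow> 'u" where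
  "psi_sharp Gs L \<psi> 0 = \<psi>"
| "psi_sharp Gs L \<psi> (Suc n) = (\<lambda>x. inv_into (Gs (Suc n)) L (smap (psi_sharp Gs L \<psi> n) (L x)))"

definition psi_EL_grp ::
  "(nat \<Rightarrow> 'u set) \<Rightarrow> ('u \<Rightarrow> ('u,'k::comm_monoid_add) ser) \<Rightarrow> ('u \<Rightarrow> 'u) \<Rightarrow> 'u \<Rightarrow> 'u" where
  "psi_EL_grp Gs L \<psi> x = psi_sharp Gs L \<psi> (LEAST n. x \<in> Gs n) x"

definition psi_EL ::
  "(nat \<Rightarrow> 'u set) \<Rightarrow> ('u \<Rightarrow> ('u,'k::comm_monoid_add) ser) \<Rightarrow> ('u \<Rightarrow> 'u) \<Rightarrow> ('u,'k) ser \<Rightarrow> ('u,'k) ser" where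
  "psi_EL Gs L \<psi> = smap (psi_EL_grp Gs L \<psi>)"

end

theory Submission
  imports Defs
begin

text \<open>
  Let \<open>h \<in> H\<close> with \<open>l(h) = g\<close> a monomial of \<open>G\<close> (so \<open>h > 1\<close>) and \<open>k \<in> k\<close>.  The
  series \<open>t = k \<cdot> h\<close> lies in \<open>k((G\<^sup>>\<^sup>1))\<close>, hence \<open>t = l\<^sup>#(x)\<close> for a monomial \<open>x\<close> of \<open>G\<^sup>#\<close>, and
  \<open>Exp t = x\<close>: any positive \<open>\<alpha> = g a (1 + \<epsilon>)\<close> whose logarithm is purely infinite must have
  \<open>\<epsilon> = 0\<close> (the leading monomial of \<open>\<epsilon>\<close> would survive in \<open>Log \<alpha>\<close>) and \<open>log a = 0\<close>.  By
  \<open>(Comp\<^sub>H)\<close>, \<open>k \<cdot> Log h = k \<cdot> \<psi>(h) = \<psi>(t)\<close>, and \<open>\<psi>\<^sup>E\<^sup>L(x) = \<psi>\<^sup>#(x) = (l\<^sup>#)\<^sup>-\<^sup>1(\<psi>(t))\<close>,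
  which is \<open>Exp(\<psi>(t)) = Exp(k \<cdot> Log h)\<close>: this is (1).  For (2) we show that \<open>\<psi>\<^sup>E\<^sup>L\<close> is injective, so
  the preimage of \<open>Exp(k \<cdot> Log h)\<close> is \<open>Exp t = 1 \<cdot> Exp t\<close> with \<open>t \<in> k((H\<^sup>>\<^sup>1))\<close>.
\<close>

section \<open>Anti-well-ordered sets\<close>

lemma anti_wo_finite: "finite (S :: 'u::linorder set) \<Longrightarrow> anti_wo S"
  unfolding anti_wo_def by (metis Max_ge Max_in finite_subset)

lemma anti_wo_subset: "anti_wo S \<Longrightarrow> T \<subseteq> S \<Longrightarrow> anti_wo T"
  unfolding anti_wo_def by blast

lemma anti_wo_Un:
  assumes "anti_wo (S :: 'u::linorder set)" "anti_wo T"
  shows "anti_wo (S \<union> T)"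
  unfolding anti_wo_def
proof (intro allI impI)
  fix A assume A: "A \<subseteq> S \<union> T \<and> A \<noteq> {}"
  have max_in: "\<exists>m\<in>A \<inter> X. \<forall>a\<in>A \<inter> X. a \<le> m" if "anti_wo X" "A \<inter> X \<noteq> {}" for X
    using that unfolding anti_wo_def by (meson inf_le2)
  show "\<exists>m\<in>A. \<forall>a\<in>A. a \<le> m"
  proof (cases "A \<inter> S = {} \<or> A \<inter> T = {}")
    case True
    then show ?thesis using A max_in[OF assms(1)] max_in[OF assms(2)] by blast
  next
    case False
    then obtain m1 m2 where "m1 \<in> A \<inter> S" "\<forall>a\<in>A \<inter> S. a \<le> m1"
                          "m2 \<in> A \<inter> T" "\<forall>a\<in>A \<inter> T. a \<le> m2"
      using max_in[OF assms(1)] max_in[OF assms(2)] by meson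
    then have "a \<le> max m1 m2" if "a \<in> A" for a
      using that A by (meson IntI Un_iff max.coboundedI1 max.coboundedI2 subsetD)
    moreover have "max m1 m2 \<in> A" using \<open>m1 \<in> A \<inter> S\<close> \<open>m2 \<in> A \<inter> T\<close> by (simp add: max_def)
    ultimately show ?thesis by blast
  qed
qed

lemma anti_wo_image:
  assumes "strict_mono_on S f" "T \<subseteq> S" "anti_wo T"
  shows "anti_wo (f ` T)"
  unfolding anti_wo_def
proof (intro allI impI)
  fix A assume A: "A \<subseteq> f ` T \<and> A \<noteq> {}"
  let ?B = "{x\<in>T. f x \<in> A}"
  have "?B \<subseteq> T" "?B \<noteq> {}" using A by auto
  then obtain m where m: "m \<in> ?B" "\<forall>x\<in>?B. x \<le> m"
    using assms(3) unfolding anti_wo_def by blast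
  have "a \<le> f m" if "a \<in> A" for a
  proof -
    obtain x where x: "x \<in> T" "a = f x" using A \<open>a \<in> A\<close> by blast
    then have "x \<le> m" using m \<open>a \<in> A\<close> by auto
    then show ?thesis using x m assms(1,2) strict_mono_on_leD by fastforce
  qed
  then show "\<exists>m\<in>A. \<forall>a\<in>A. a \<le> m" using m by auto
qed

lemma lead_eq: "m \<in> supp a \<Longrightarrow> (\<And>x. x \<in> supp a \<Longrightarrow> x \<le> m) \<Longrightarrow> lead a = m"
  unfolding lead_def by (rule the_equality) (auto intro: order.antisym)

lemma lead_max:
  assumes "anti_wo (supp a)" "supp a \<noteq> {}"
  shows "lead a \<in> supp a" "x \<in> supp a \<Longrightarrow> x \<le> lead a"
proof -
  obtain m where "m \<in> supp a" "\<forall>x\<in>supp a. x \<le> m"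
    using assms unfolding anti_wo_def by blast
  then show "lead a \<in> supp a" "x \<in> supp a \<Longrightarrow> x \<le> lead a" using lead_eq by metis+
qed

lemma supp_smon [simp]: "supp (smon g :: ('u,'k::zero_neq_one) ser) = {g}"
  by (auto simp: supp_def smon_def)

lemma lead_smon [simp]: "lead (smon g :: ('u::linorder,'k::zero_neq_one) ser) = g"
  by (rule lead_eq) auto

lemma smon_at [simp]: "smon g g = 1"
  by (simp add: smon_def)

lemma spos_smon: "spos (smon x :: ('u::linorder,'k::linordered_field) ser)"
  by (simp add: spos_def)

lemma sscale_smon_Ser:
  assumes "h \<in> S"
  shows "(sscale c (smon h) :: ('u::linorder,'k::field) ser) \<in> Ser S"
proof -
  have supp: "supp (sscale c (smon h) :: ('u,'k) ser) \<subseteq> {h}"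
    by (auto simp: supp_def sscale_def smon_def)
  then have "anti_wo (supp (sscale c (smon h) :: ('u,'k) ser))"
    by (rule anti_wo_subset[OF anti_wo_finite, rotated]) simp
  then show ?thesis using supp assms unfolding Ser_def by auto
qed

lemma smon_ELF: "x \<in> Gs n \<Longrightarrow> (smon x :: ('u::linorder,'k::zero_neq_one) ser) \<in> ELF Gs"
  using anti_wo_finite[of "{x}"] unfolding ELF_def Ser_def by auto

lemma supp_sdiff: "supp (sdiff a b) \<subseteq> supp a \<union> supp (b :: ('u,'k::ab_group_add) ser)"
  by (auto simp: supp_def sdiff_def)

text \<open>Strict positivity is asymmetric: \<open>b - a\<close> and \<open>a - b\<close> have the same leading
  monomial and opposite leading coefficients.\<close>

lemma sless_irrefl: "\<not> sless a a"
  by (simp add: sless_def spos_def sdiff_def supp_def)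

lemma sless_asym:
  assumes "sless a b" shows "\<not> sless b a"
proof
  assume "sless b a"
  have "supp (sdiff a b) = supp (sdiff b a)" by (auto simp: supp_def sdiff_def)
  then have "lead (sdiff a b) = lead (sdiff b a)" unfolding lead_def by simp
  then show False using assms \<open>sless b a\<close> unfolding sless_def spos_def by (simp add: sdiff_def)
qed

lemma smul_smon_left: "smul (smon c) (a :: ('u::ab_group_add,'k::comm_ring_1) ser) z = a (z - c)"
proof -
  have "{y. (smon c :: ('u,'k) ser) y \<noteq> 0 \<and> a (z - y) \<noteq> 0} = (if a (z - c) \<noteq> 0 then {c} else {})"
    by (auto simp: smon_def)
  then show ?thesis by (auto simp: smul_def smon_def)
qed

lemma smul_smon0_left: "smul (smon 0) a = (a :: ('u::ab_group_add,'k::comm_ring_1) ser)"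
  by (rule ext) (simp add: smul_smon_left)

lemma smul_smon0_right: "smul a (smon 0) = (a :: ('u::ab_group_add,'k::comm_ring_1) ser)"
proof
  fix z
  have "{y. a y \<noteq> 0 \<and> (smon 0 :: ('u,'k) ser) (z - y) \<noteq> 0} = (if a z \<noteq> 0 then {z} else {})"
    by (auto simp: smon_def)
  then show "smul a (smon 0) z = a z" by (auto simp: smul_def smon_def)
qed

lemma smul_nonzero: "smul a b z \<noteq> 0 \<Longrightarrow> \<exists>y. a y \<noteq> 0 \<and> b (z - y) \<noteq> 0"
  unfolding smul_def by (metis (mono_tags, lifting) Collect_empty_eq sum.empty)

lemma smap_smon: "smap f (smon x) = (smon (f x) :: ('u,'k::{comm_monoid_add,zero_neq_one}) ser)"
proof
  fix y
  have "{x'. smon x x' \<noteq> (0::'k) \<and> f x' = y} = (if f x = y then {x} else {})"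
    by (auto simp: smon_def)
  then show "smap f (smon x) y = (smon (f x) y :: 'k)" by (auto simp: smap_def smon_def)
qed

lemma smap_sscale_smon: "smap f (sscale c (smon h)) = sscale (c :: 'k::field) (smon (f h))"
proof
  fix y
  have "{x'. sscale c (smon h) x' \<noteq> (0::'k) \<and> f x' = y} = (if c \<noteq> 0 \<and> f h = y then {h} else {})"
    by (auto simp: smon_def sscale_def)
  then show "smap f (sscale c (smon h)) y = sscale c (smon (f h)) y"
    by (auto simp: smap_def smon_def sscale_def)
qed

lemma smap_at:
  assumes "inj_on f S" "supp a \<subseteq> S" "x \<in> S"
  shows "smap f a (f x) = a x"
proof -
  have "{x'. a x' \<noteq> 0 \<and> f x' = f x} = (if a x \<noteq> 0 then {x} else {})"
    using assms unfolding supp_def inj_on_def by auto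
  then show ?thesis by (auto simp: smap_def)
qed

lemma smap_outside:
  assumes "y \<notin> f ` supp a" shows "smap f a y = 0"
proof -
  have none: "{x. a x \<noteq> 0 \<and> f x = y} = {}" using assms by (auto simp: supp_def)
  show ?thesis unfolding smap_def none by simp
qed

lemma supp_smap:
  assumes "inj_on f S" "supp a \<subseteq> S"
  shows "supp (smap f a) = f ` supp a"
proof
  show "supp (smap f a) \<subseteq> f ` supp a" using smap_outside by (fastforce simp: supp_def)
  show "f ` supp a \<subseteq> supp (smap f a)" using smap_at[OF assms] assms(2) by (auto simp: supp_def)
qed

lemma smap_cong: "(\<And>x. x \<in> supp a \<Longrightarrow> f x = g x) \<Longrightarrow> smap f a = smap g a"
  unfolding smap_def supp_def by (rule ext) (rule sum.cong; auto)

lemma smap_sdiff: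
  fixes a b :: "('u,'k::ab_group_add) ser"
  assumes f: "inj_on f S" and ab: "supp a \<subseteq> S" "supp b \<subseteq> S"
  shows "smap f (sdiff a b) = sdiff (smap f a) (smap f b)"
proof
  fix y
  have ab': "supp (sdiff a b) \<subseteq> S" using ab supp_sdiff[of a b] by blast
  show "smap f (sdiff a b) y = sdiff (smap f a) (smap f b) y"
  proof (cases "y \<in> f ` S")
    case True
    then obtain x where "x \<in> S" "y = f x" by auto
    then show ?thesis using smap_at[OF f ab'] smap_at[OF f ab(1)] smap_at[OF f ab(2)]
      by (simp add: sdiff_def)
  next
    case False
    then have "y \<notin> f ` supp a" "y \<notin> f ` supp b" "y \<notin> f ` supp (sdiff a b)" using ab ab' by auto
    then show ?thesis by (simp add: smap_outside sdiff_def)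
  qed
qed

lemma spos_smap:
  assumes f: "strict_mono_on S f" and a: "supp a \<subseteq> S" "anti_wo (supp a)" "spos a"
  shows "spos (smap f a)"
proof -
  have ne: "supp a \<noteq> {}" using a(3) by (simp add: spos_def)
  have inj: "inj_on f S" using f strict_mono_on_imp_inj_on by blast
  note lead = lead_max[OF a(2) ne]
  have "lead (smap f a) = f (lead a)"
  proof (rule lead_eq)
    show "f (lead a) \<in> supp (smap f a)" using supp_smap[OF inj a(1)] lead by auto
    show "y \<le> f (lead a)" if y: "y \<in> supp (smap f a)" for y
    proof -
      obtain x where "x \<in> supp a" "y = f x" using y supp_smap[OF inj a(1)] by auto
      then show ?thesis using lead a(1) strict_mono_on_leD[OF f] by blast
    qed
  qed
  moreover have "smap f a (f (lead a)) = a (lead a)" using smap_at[OF inj a(1)] lead a(1) by auto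
  ultimately show ?thesis using a(3) supp_smap[OF inj a(1)] ne by (simp add: spos_def)
qed

lemma sless_smap:
  assumes f: "strict_mono_on S f"
    and a: "supp a \<subseteq> S" "anti_wo (supp a)" and b: "supp b \<subseteq> S" "anti_wo (supp b)"
    and "sless a b"
  shows "sless (smap f a) (smap f b)"
proof -
  have sd: "supp (sdiff b a) \<subseteq> supp a \<union> supp b" using supp_sdiff[of b a] by blast
  have "anti_wo (supp (sdiff b a))" using anti_wo_subset[OF anti_wo_Un[OF a(2) b(2)] sd] .
  then have "spos (smap f (sdiff b a))"
    using spos_smap[OF f] sd a b \<open>sless a b\<close> unfolding sless_def by blast
  then show ?thesis
    using smap_sdiff[OF strict_mono_on_imp_inj_on[OF f] b(1) a(1)] unfolding sless_def by simp
qed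

lemma smap_Ser_pos_part:
  assumes f: "f ` S \<subseteq> S" "strict_mono_on S f" "f 0 = 0" and "0 \<in> S"
    and a: "a \<in> Ser (pos_part S)"
  shows "smap f a \<in> Ser (pos_part S)"
proof -
  have sa: "supp a \<subseteq> pos_part S" "anti_wo (supp a)" using a by (auto simp: Ser_def)
  have sa': "supp a \<subseteq> S" using sa(1) by (auto simp: pos_part_def)
  have "f ` supp a \<subseteq> pos_part S"
  proof
    fix y assume "y \<in> f ` supp a"
    then obtain z where z: "z \<in> S" "0 < z" "y = f z" using sa(1) by (auto simp: pos_part_def)
    then have "f 0 < f z" using f(2) \<open>0 \<in> S\<close> unfolding strict_mono_on_def by blast
    then show "y \<in> pos_part S" using z f(1,3) by (auto simp: pos_part_def)
  qed
  moreover have "anti_wo (f ` supp a)" using anti_wo_image[OF f(2) sa' sa(2)] .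
  ultimately show ?thesis
    using supp_smap[OF strict_mono_on_imp_inj_on[OF f(2)] sa'] unfolding Ser_def by auto
qed

context
  fixes S :: "'u::linordered_ab_group_add set" and L :: "'u \<Rightarrow> ('u,'k::linordered_field) ser"
  assumes emb: "ser_embedding S L"
begin

text \<open>An order-preserving embedding also reflects the order, so it is injective.\<close>

lemma ser_embedding_less_iff:
  assumes "x \<in> S" "y \<in> S" shows "sless (L x) (L y) \<longleftrightarrow> x < y"
  using emb assms sless_asym unfolding ser_embedding_def by (metis linorder_neqE)

lemma ser_embedding_inj: "inj_on L S"
  by (rule inj_onI) (metis linorder_neqE ser_embedding_less_iff sless_irrefl)

lemma ser_embedding_zero:
  assumes "0 \<in> S" shows "L 0 = (\<lambda>_. 0)"
proof
  fix z
  have "L (0 + 0) = sadd (L 0) (L 0)" using emb assms unfolding ser_embedding_def by blast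
  then have "L 0 z = L 0 z + L 0 z" unfolding sadd_def by (metis add_0)
  then show "L 0 z = 0" by simp
qed

lemma ser_embedding_pos:
  assumes "0 \<in> S" "x \<in> S" "spos (L x)" shows "0 < x"
proof -
  have "sless (L 0) (L x)"
    using assms(3) ser_embedding_zero[OF assms(1)] by (simp add: sless_def sdiff_def)
  then show ?thesis using ser_embedding_less_iff assms(1,2) by blast
qed

end

section \<open>The exponential tower\<close>

lemma tower_zero: "EL_tower Gs L \<Longrightarrow> 0 \<in> Gs n"
  unfolding EL_tower_def subgrp_def by blast

lemma tower_mono: "EL_tower Gs L \<Longrightarrow> k \<le> j \<Longrightarrow> Gs k \<subseteq> Gs j"
  unfolding EL_tower_def by (metis lift_Suc_mono_le)

lemma tower_embedding: "EL_tower Gs L \<Longrightarrow> ser_embedding (Gs n) L"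
  unfolding EL_tower_def by (cases n) auto

lemma tower_image: "EL_tower Gs L \<Longrightarrow> L ` Gs (Suc n) = Ser (pos_part (Gs n))"
  unfolding EL_tower_def by (blast dest: bij_betw_imp_surj_on)

lemma tower_L_pos_supp:
  assumes T: "EL_tower Gs L" and x: "x \<in> Gs n" and "L x z \<noteq> 0"
  shows "0 < z"
proof -
  have "\<exists>m. L x \<in> Ser (pos_part (Gs m))"
  proof (cases n)
    case 0 then show ?thesis using T x unfolding EL_tower_def by blast
  next
    case (Suc m) then show ?thesis using tower_image[OF T, of m] x by blast
  qed
  then show ?thesis using assms(3) by (auto simp: Ser_def supp_def pos_part_def)
qed

lemma tower_common_level:
  assumes "EL_tower Gs L" "x \<in> Gs a" "y \<in> Gs b"
  shows "x \<in> Gs (max a b)" "y \<in> Gs (max a b)"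
  using tower_mono[OF assms(1)] assms(2,3) by (meson max.cobounded1 max.cobounded2 subsetD)+

section \<open>The logarithm of a series\<close>

definition log1p_series :: "('u::ab_group_add,'k::field) ser \<Rightarrow> ('u,'k) ser" where
  "log1p_series e =
     sfam_sum (\<lambda>i. if i = 0 then (\<lambda>_. 0) else sscale ((-1) ^ (i - 1) / of_nat i) (spow e i))"

lemma Log_at:
  "Log lg L \<alpha> z = L (lead \<alpha>) z + lg (\<alpha> (lead \<alpha>)) * smon 0 z + log1p_series (eps_part \<alpha>) z"
  by (simp add: Log_def log1p_series_def sadd_def sscale_def)

lemma eps_part_at: "eps_part \<alpha> z = inverse (\<alpha> (lead \<alpha>)) * \<alpha> (z + lead \<alpha>) - smon 0 z"
  by (simp add: eps_part_def sdiff_def sscale_def smul_smon_left)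

lemma log1p_series_zero:
  "log1p_series (\<lambda>_. 0) = ((\<lambda>_. 0) :: ('u::ab_group_add,'k::field) ser)"
proof -
  have "spow (\<lambda>_. 0) i z = (0 :: 'k)" if "0 < i" for i and z :: 'u
    using that by (cases i) (auto simp: smul_def)
  then have "(if i = 0 then (\<lambda>_. 0) else sscale c (spow (\<lambda>_. 0) i)) z = (0 :: 'k)"
    for i c and z :: 'u
    by (simp add: sscale_def)
  then show ?thesis unfolding log1p_series_def sfam_sum_def by simp
qed

text \<open>If every monomial of \<open>\<epsilon>\<close> lies below \<open>v < 1\<close>, every monomial of \<open>\<epsilon>\<^sup>i\<close> (\<open>i \<ge> 1\<close>) lies
  below \<open>v\<close>, and for \<open>i \<ge> 2\<close> even below \<open>v\<^sup>2 < v\<close>.  So at \<open>v\<close> the series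
  \<open>log (1 + \<epsilon>)\<close> reduces to its first term \<open>\<epsilon>\<close>.\<close>

lemma spow_supp_le:
  fixes e :: "('u::linordered_ab_group_add,'k::comm_ring_1) ser"
  assumes bound: "\<And>z. e z \<noteq> 0 \<Longrightarrow> z \<le> v" and "v < 0"
  shows "spow e (Suc i) z \<noteq> 0 \<Longrightarrow> z \<le> v"
proof (induction i arbitrary: z)
  case 0
  then show ?case using bound by (simp add: smul_smon0_right)
next
  case (Suc i)
  then obtain y where y: "e y \<noteq> 0" "spow e (Suc i) (z - y) \<noteq> 0"
    using smul_nonzero by (metis spow.simps(2))
  then have "z \<le> v + v" using bound Suc.IH by (metis add_mono diff_add_cancel)
  also have "\<dots> \<le> v" using \<open>v < 0\<close> by simp
  finally show ?case .
qed

lemma spow_at_bound: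
  fixes e :: "('u::linordered_ab_group_add,'k::comm_ring_1) ser"
  assumes bound: "\<And>z. e z \<noteq> 0 \<Longrightarrow> z \<le> v" and "v < 0"
  shows "spow e (Suc (Suc i)) v = 0"
proof (rule ccontr)
  assume "spow e (Suc (Suc i)) v \<noteq> 0"
  then obtain y where "e y \<noteq> 0" "spow e (Suc i) (v - y) \<noteq> 0"
    using smul_nonzero by (metis spow.simps(2))
  then have "v \<le> v + v" using bound spow_supp_le[OF bound \<open>v < 0\<close>] by (metis add_mono diff_add_cancel)
  then show False using \<open>v < 0\<close> by simp
qed

lemma log1p_series_at_bound:
  fixes e :: "('u::linordered_ab_group_add,'k::field) ser"
  assumes bound: "\<And>z. e z \<noteq> 0 \<Longrightarrow> z \<le> v" and "v < 0"
  shows "log1p_series e v = e v"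
proof -
  define F where "F i = (if i = 0 then (\<lambda>_. 0) else sscale ((-1) ^ (i - 1) / of_nat i) (spow e i))"
    for i :: nat
  have F: "F i v = (if i = 1 then e v else 0)" for i
  proof (cases i)
    case (Suc j)
    show ?thesis
    proof (cases j)
      case 0
      then show ?thesis using \<open>i = Suc j\<close> by (simp add: F_def sscale_def smul_smon0_right)
    next
      case (Suc k)
      then show ?thesis using \<open>i = Suc j\<close> spow_at_bound[of e v k, OF bound \<open>v < 0\<close>]
        by (simp add: F_def sscale_def del: spow.simps)
    qed
  qed (simp add: F_def)
  then have "{i. F i v \<noteq> 0} = (if e v = 0 then {} else {1})" by auto
  then show ?thesis using F by (simp add: log1p_series_def sfam_sum_def F_def[symmetric])
qed

lemma field_log_one: "field_log lg \<Longrightarrow> lg 1 = 0"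
  unfolding field_log_def by (metis add_cancel_left_right mult_1 zero_less_one)

lemma field_log_eq_zero:
  assumes "field_log lg" "0 < a" "lg a = 0" shows "a = 1"
  using assms field_log_one[OF assms(1)] unfolding field_log_def bij_betw_def inj_on_def
  by (metis greaterThan_iff zero_less_one)

lemma Log_smon:
  assumes "field_log (lg :: 'k::linordered_field \<Rightarrow> 'k)"
  shows "Log lg L (smon x) = L (x :: 'u::linordered_ab_group_add)"
proof -
  have "eps_part (smon x :: ('u,'k) ser) = (\<lambda>_. 0)"
    by (rule ext) (simp add: eps_part_at, simp add: smon_def)
  then show ?thesis
    by (intro ext) (simp add: Log_at log1p_series_zero field_log_one[OF assms])
qed

lemma eps_part_supp:
  assumes "anti_wo (supp \<alpha>)" "spos \<alpha>" "eps_part \<alpha> z \<noteq> 0"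
  shows "z < 0" "z + lead \<alpha> \<in> supp \<alpha>"
proof -
  let ?g = "lead \<alpha>" and ?a = "\<alpha> (lead \<alpha>)"
  have a: "?a > 0" using assms(2) by (simp add: spos_def)
  have in_supp: "z + ?g \<in> supp \<alpha>"
  proof (rule ccontr)
    assume "z + ?g \<notin> supp \<alpha>"
    then have "z = 0" using assms(3) by (auto simp: supp_def eps_part_at smon_def split: if_splits)
    then show False using \<open>z + ?g \<notin> supp \<alpha>\<close> a by (simp add: supp_def)
  qed
  then show "z + lead \<alpha> \<in> supp \<alpha>" .
  have "z \<le> 0" using lead_max(2)[OF assms(1), of "z + ?g"] in_supp by auto
  moreover have "z \<noteq> 0" using assms(3) a by (auto simp: eps_part_at smon_def)
  ultimately show "z < 0" by simp
qed

lemma anti_wo_eps_part: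
  assumes "anti_wo (supp \<alpha>)" "spos \<alpha>"
  shows "anti_wo (supp (eps_part \<alpha>))"
proof -
  have "supp (eps_part \<alpha>) \<subseteq> (\<lambda>w. w - lead \<alpha>) ` supp \<alpha>"
    using eps_part_supp(2)[OF assms] by (force simp: supp_def)
  moreover have "strict_mono_on UNIV (\<lambda>w. w - lead \<alpha>)" by (simp add: strict_mono_on_def)
  ultimately show ?thesis
    using anti_wo_image[of UNIV _ "supp \<alpha>"] anti_wo_subset assms(1) by blast
qed

text \<open>If \<open>Log \<alpha>\<close> is infinite (all its monomials are \<open>> 1\<close>), the infinitesimal part \<open>\<epsilon>\<close> of
  \<open>\<alpha>\<close> vanishes: otherwise, at the leading monomial \<open>v < 1\<close> of \<open>\<epsilon>\<close> the only contribution
  to \<open>Log \<alpha>\<close> would be \<open>\<epsilon>(v) \<noteq> 0\<close>.\<close>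

lemma eps_part_vanishes:
  assumes \<alpha>: "anti_wo (supp \<alpha>)" "spos \<alpha>"
    and L_inf: "\<And>z. L (lead \<alpha>) z \<noteq> 0 \<Longrightarrow> 0 < z"
    and Log_inf: "\<And>z. Log lg L \<alpha> z \<noteq> 0 \<Longrightarrow> 0 < z"
  shows "eps_part \<alpha> = (\<lambda>_. 0)"
proof (rule ccontr)
  define e where "e = eps_part \<alpha>"
  assume "eps_part \<alpha> \<noteq> (\<lambda>_. 0)"
  then have "supp e \<noteq> {}" by (auto simp: e_def supp_def)
  define v where "v = lead e"
  have v: "v \<in> supp e" "\<And>z. e z \<noteq> 0 \<Longrightarrow> z \<le> v"
    using lead_max[OF anti_wo_eps_part[OF \<alpha>] \<open>supp e \<noteq> {}\<close>[unfolded e_def]]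
    by (auto simp: v_def e_def supp_def)
  have "v < 0" using eps_part_supp(1)[OF \<alpha>] v(1) by (simp add: e_def supp_def)
  moreover have "L (lead \<alpha>) v = 0" using L_inf[of v] \<open>v < 0\<close> by force
  ultimately have "Log lg L \<alpha> v = e v"
    using log1p_series_at_bound[of e v, OF v(2)] by (auto simp: Log_at e_def smon_def)
  then show False using Log_inf[of v] \<open>v < 0\<close> v(1) by (force simp: supp_def)
qed

lemma Log_infinite_imp_monomial:
  assumes lg: "field_log lg"
    and \<alpha>: "anti_wo (supp \<alpha>)" "spos \<alpha>"
    and L_inf: "\<And>z. L (lead \<alpha>) z \<noteq> 0 \<Longrightarrow> 0 < z"
    and Log_inf: "\<And>z. Log lg L \<alpha> z \<noteq> 0 \<Longrightarrow> 0 < z"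
  shows "\<alpha> = smon (lead \<alpha>)"
proof -
  let ?g = "lead \<alpha>" and ?a = "\<alpha> (lead \<alpha>)"
  have e: "eps_part \<alpha> = (\<lambda>_. 0)" by (rule eps_part_vanishes[OF \<alpha> L_inf Log_inf])
  have a: "?a > 0" using \<alpha>(2) by (simp add: spos_def)
  have \<alpha>_at: "\<alpha> w = ?a * smon 0 (w - ?g)" for w
    using fun_cong[OF e, of "w - ?g"] a by (simp add: eps_part_at field_simps)
  have "L ?g 0 = 0" using L_inf[of 0] by force
  then have "Log lg L \<alpha> 0 = lg ?a" by (simp add: Log_at e log1p_series_zero)
  then have one: "?a = 1" using Log_inf[of 0] field_log_eq_zero[OF lg a] by force
  show ?thesis
  proof
    fix w show "\<alpha> w = smon ?g w" using \<alpha>_at[of w] unfolding one by (simp add: smon_def)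
  qed
qed

section \<open>The exponential of an infinite series\<close>

text \<open>This is where the
  choice made by \<open>Exp = Log\<^sup>-\<^sup>1\<close> is pinned down.\<close>

lemma Exp_L:
  assumes lg: "field_log lg" and T: "EL_tower Gs L" and x: "x \<in> Gs n"
  shows "Exp lg Gs L (L x) = smon x"
proof -
  let ?P = "{\<alpha> \<in> ELF Gs. spos \<alpha>}"
  have "smon x \<in> ?P" "Log lg L (smon x) = L x"
    using smon_ELF[of x Gs n, OF x] spos_smon Log_smon[OF lg] by auto
  then have img: "L x \<in> Log lg L ` ?P" by force
  define \<alpha> where "\<alpha> = Exp lg Gs L (L x)"
  have "\<alpha> \<in> ?P" and Log_\<alpha>: "Log lg L \<alpha> = L x"
    unfolding \<alpha>_def Exp_def using inv_into_into[OF img] f_inv_into_f[OF img] by auto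
  then obtain m where "\<alpha> \<in> Ser (Gs m)" "spos \<alpha>" by (auto simp: ELF_def)
  then have \<alpha>: "anti_wo (supp \<alpha>)" "supp \<alpha> \<subseteq> Gs m" "spos \<alpha>" by (auto simp: Ser_def)
  have g: "lead \<alpha> \<in> Gs m"
    using lead_max(1)[OF \<alpha>(1)] \<alpha>(2,3) by (auto simp: spos_def)
  have Log_inf: "0 < z" if "Log lg L \<alpha> z \<noteq> 0" for z
    using that Log_\<alpha> tower_L_pos_supp[OF T x] by simp
  have mono: "\<alpha> = smon (lead \<alpha>)"
    by (rule Log_infinite_imp_monomial[OF lg \<alpha>(1,3) tower_L_pos_supp[OF T g] Log_inf])
  have "L (lead \<alpha>) = L x"
    using Log_smon[OF lg, of L "lead \<alpha>"] Log_\<alpha> mono by metis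
  then have "lead \<alpha> = x"
    using tower_common_level[OF T g x] ser_embedding_inj[OF tower_embedding[OF T]]
    unfolding inj_on_def by blast
  then show ?thesis using mono by (simp add: \<alpha>_def)
qed

section \<open>Lifting maps compatible with the logarithm up the tower\<close>

definition log_compatible ::
  "'u::linordered_ab_group_add set \<Rightarrow> ('u \<Rightarrow> ('u,'k::comm_monoid_add) ser) \<Rightarrow> ('u \<Rightarrow> 'u) \<Rightarrow> bool" where
  "log_compatible S L f \<longleftrightarrow>
     f ` S \<subseteq> S \<and> strict_mono_on S f \<and> f 0 = 0 \<and> (\<forall>x\<in>S. L (f x) = smap f (L x))"

definition lift_map ::
  "(nat \<Rightarrow> 'u set) \<Rightarrow> ('u \<Rightarrow> ('u,'k::comm_monoid_add) ser) \<Rightarrow> nat \<Rightarrow> ('u \<Rightarrow> 'u) \<Rightarrow> 'u \<Rightarrow> 'u" where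
  "lift_map Gs L n f = (\<lambda>x. inv_into (Gs (Suc n)) L (smap f (L x)))"

lemma psi_sharp_Suc: "psi_sharp Gs L \<psi> (Suc n) = lift_map Gs L n (psi_sharp Gs L \<psi> n)"
  by (simp add: lift_map_def)

lemma morphism_log_compatible:
  assumes T: "EL_tower Gs L" and M: "morphism (Gs 0) L \<psi>"
  shows "log_compatible (Gs 0) L \<psi>"
proof -
  have "\<psi> (0 + 0) = \<psi> 0 + \<psi> 0" using M tower_zero[OF T] unfolding morphism_def by blast
  then have "\<psi> 0 = 0" by simp
  then show ?thesis using M unfolding morphism_def log_compatible_def strict_mono_on_def by auto
qed

context
  fixes Gs :: "nat \<Rightarrow> 'u::linordered_ab_group_add set" and L :: "'u \<Rightarrow> ('u,'k::linordered_field) ser"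
    and n :: nat and f :: "'u \<Rightarrow> 'u"
  assumes T: "EL_tower Gs L" and f: "log_compatible (Gs n) L f"
begin

text \<open>The lift is well defined on level \<open>n + 1\<close>, since \<open>f\<close> maps \<open>k((G\<^sup>#\<^sup>n\<^sup>>\<^sup>1))\<close> into itself.\<close>

lemma lift_map_L:
  assumes x: "x \<in> Gs (Suc n)"
  shows "lift_map Gs L n f x \<in> Gs (Suc n)" "L (lift_map Gs L n f x) = smap f (L x)"
proof -
  have "L x \<in> Ser (pos_part (Gs n))" using tower_image[OF T] x by blast
  then have "smap f (L x) \<in> L ` Gs (Suc n)"
    using smap_Ser_pos_part[of f "Gs n"] f tower_zero[OF T] tower_image[OF T]
    unfolding log_compatible_def by blast
  then show "lift_map Gs L n f x \<in> Gs (Suc n)" "L (lift_map Gs L n f x) = smap f (L x)"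
    unfolding lift_map_def by (auto intro: inv_into_into f_inv_into_f)
qed

text \<open>The lift extends \<open>f\<close>: on level \<open>n\<close> it is \<open>L\<^sup>-\<^sup>1 \<circ> L \<circ> f = f\<close>.\<close>

lemma lift_map_extends:
  assumes x: "x \<in> Gs n" shows "lift_map Gs L n f x = f x"
proof -
  have fx: "f x \<in> Gs (Suc n)"
    using f x tower_mono[OF T, of n "Suc n"] unfolding log_compatible_def by auto
  have "smap f (L x) = L (f x)" using f x by (simp add: log_compatible_def)
  then show ?thesis
    unfolding lift_map_def
    using inv_into_f_f[OF ser_embedding_inj[OF tower_embedding[OF T, of "Suc n"]] fx] by simp
qed

text \<open>Monotonicity: \<open>L\<close> reflects the order, and \<open>f\<close>
  preserves the order of the series \<open>L x\<close>, whose monomials lie in level \<open>n\<close>.\<close>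

lemma lift_map_log_compatible: "log_compatible (Gs (Suc n)) L (lift_map Gs L n f)"
proof -
  let ?f' = "lift_map Gs L n f"
  have L_level: "supp (L x) \<subseteq> Gs n" "anti_wo (supp (L x))" if "x \<in> Gs (Suc n)" for x
    using tower_image[OF T, of n] that by (auto simp: Ser_def pos_part_def)
  have f_mono: "strict_mono_on (Gs n) f" using f by (simp add: log_compatible_def)
  note emb = tower_embedding[OF T, of "Suc n"]
  have mono: "strict_mono_on (Gs (Suc n)) ?f'"
  proof (rule strict_mono_onI)
    fix x y assume xy: "x \<in> Gs (Suc n)" "y \<in> Gs (Suc n)" "x < y"
    then have "sless (L x) (L y)" using ser_embedding_less_iff[OF emb] by blast
    then have "sless (smap f (L x)) (smap f (L y))"
      using sless_smap[OF f_mono L_level[OF xy(1)] L_level[OF xy(2)]] by blast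
    then show "?f' x < ?f' y" using lift_map_L xy ser_embedding_less_iff[OF emb] by metis
  qed
  have "L (?f' x) = smap ?f' (L x)" if "x \<in> Gs (Suc n)" for x
    using lift_map_L(2)[OF that] smap_cong[of "L x" f ?f'] lift_map_extends L_level(1)[OF that]
    by (metis subsetD)
  moreover have "?f' 0 = 0" using lift_map_extends f tower_zero[OF T] by (simp add: log_compatible_def)
  ultimately show ?thesis using mono lift_map_L(1) by (auto simp: log_compatible_def)
qed

end

context
  fixes Gs :: "nat \<Rightarrow> 'u::linordered_ab_group_add set" and L :: "'u \<Rightarrow> ('u,'k::linordered_field) ser"
    and \<psi> :: "'u \<Rightarrow> 'u"
  assumes T: "EL_tower Gs L" and M: "morphism (Gs 0) L \<psi>"
begin

lemma psi_sharp_log_compatible: "log_compatible (Gs n) L (psi_sharp Gs L \<psi> n)"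
proof (induction n)
  case 0
  then show ?case using morphism_log_compatible[OF T M] by simp
next
  case (Suc n)
  then show ?case unfolding psi_sharp_Suc by (rule lift_map_log_compatible[OF T])
qed

lemma psi_sharp_extends:
  assumes "x \<in> Gs n" "n \<le> m" shows "psi_sharp Gs L \<psi> m x = psi_sharp Gs L \<psi> n x"
  using assms(2)
proof (induction m rule: dec_induct)
  case (step m)
  have "x \<in> Gs m" using tower_mono[OF T step(1)] assms(1) by blast
  then have "psi_sharp Gs L \<psi> (Suc m) x = psi_sharp Gs L \<psi> m x"
    unfolding psi_sharp_Suc by (rule lift_map_extends[OF T psi_sharp_log_compatible])
  then show ?case using step(3) by simp
qed simp

lemma psi_EL_grp_eq:
  assumes x: "x \<in> Gs n" shows "psi_EL_grp Gs L \<psi> x = psi_sharp Gs L \<psi> n x"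
proof -
  define k where "k = (LEAST n. x \<in> Gs n)"
  have "x \<in> Gs k" "k \<le> n" unfolding k_def using x by (auto intro: LeastI Least_le)
  then show ?thesis
    using psi_sharp_extends unfolding psi_EL_grp_def k_def[symmetric] by metis
qed

lemma psi_EL_grp_inj: "inj_on (psi_EL_grp Gs L \<psi>) (\<Union>n. Gs n)"
proof (rule inj_onI)
  fix x y assume "x \<in> (\<Union>n. Gs n)" "y \<in> (\<Union>n. Gs n)" and eq: "psi_EL_grp Gs L \<psi> x = psi_EL_grp Gs L \<psi> y"
  then obtain a b where "x \<in> Gs a" "y \<in> Gs b" by auto
  note xy = tower_common_level[OF T this]
  have "inj_on (psi_sharp Gs L \<psi> (max a b)) (Gs (max a b))"
    using psi_sharp_log_compatible strict_mono_on_imp_inj_on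
    unfolding log_compatible_def by blast
  then show "x = y" using eq xy psi_EL_grp_eq unfolding inj_on_def by metis
qed

lemma psi_EL_inj: "inj_on (psi_EL Gs L \<psi>) (ELF Gs)"
proof (rule inj_onI)
  fix a b :: "('u,'k) ser"
  assume ab: "a \<in> ELF Gs" "b \<in> ELF Gs" and eq: "psi_EL Gs L \<psi> a = psi_EL Gs L \<psi> b"
  have supp: "supp a \<subseteq> (\<Union>n. Gs n)" "supp b \<subseteq> (\<Union>n. Gs n)"
    using ab by (auto simp: ELF_def Ser_def)
  show "a = b"
  proof
    fix z show "a z = b z"
    proof (cases "z \<in> (\<Union>n. Gs n)")
      case True
      then show ?thesis
        using smap_at[OF psi_EL_grp_inj supp(1) True] smap_at[OF psi_EL_grp_inj supp(2) True] eq
        unfolding psi_EL_def by metis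
    next
      case False
      then have "z \<notin> supp a" "z \<notin> supp b" using supp by blast+
      then show ?thesis by (simp add: supp_def)
    qed
  qed
qed

text \<open>\<open>\<psi>\<^sup>E\<^sup>L\<close> intertwines \<open>Exp\<close> and \<open>\<psi>\<^sup>#\<^sup>n\<close> on the infinite series \<open>t \<in> k((G\<^sup>#\<^sup>n\<^sup>>\<^sup>1))\<close>:
  \<open>Exp t\<close> is the monomial \<open>x = L\<^sup>-\<^sup>1 t\<close> of level \<open>n + 1\<close>, and \<open>\<psi>\<^sup>#\<^sup>n\<^sup>+\<^sup>1 x = L\<^sup>-\<^sup>1 (\<psi>\<^sup>#\<^sup>n t)\<close>.\<close>

lemma psi_EL_Exp:
  assumes lg: "field_log lg" and t: "t \<in> Ser (pos_part (Gs n))"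
  shows "psi_EL Gs L \<psi> (Exp lg Gs L t) = Exp lg Gs L (smap (psi_sharp Gs L \<psi> n) t)"
    and "inv_into (ELF Gs) (psi_EL Gs L \<psi>) (Exp lg Gs L (smap (psi_sharp Gs L \<psi> n) t))
           = Exp lg Gs L t"
proof -
  obtain x where x: "x \<in> Gs (Suc n)" "t = L x" using t tower_image[OF T, of n] by blast
  let ?y = "psi_sharp Gs L \<psi> (Suc n) x"
  note lift = lift_map_L[OF T psi_sharp_log_compatible x(1), folded psi_sharp_Suc]
  have Exp_x: "Exp lg Gs L t = smon x" using Exp_L[OF lg T x(1)] x(2) by simp
  have Exp_y: "Exp lg Gs L (smap (psi_sharp Gs L \<psi> n) t) = smon ?y"
    using Exp_L[OF lg T lift(1)] lift(2) x(2) by simp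
  have image: "psi_EL Gs L \<psi> (smon x) = smon ?y"
    unfolding psi_EL_def smap_smon psi_EL_grp_eq[OF x(1)] ..
  then show "psi_EL Gs L \<psi> (Exp lg Gs L t) = Exp lg Gs L (smap (psi_sharp Gs L \<psi> n) t)"
    using Exp_x Exp_y by simp
  show "inv_into (ELF Gs) (psi_EL Gs L \<psi>) (Exp lg Gs L (smap (psi_sharp Gs L \<psi> n) t))
           = Exp lg Gs L t"
    using inv_into_f_f[OF psi_EL_inj smon_ELF[of x Gs "Suc n", OF x(1)]] image Exp_x Exp_y by simp
qed

end

theorem lemma9:
  fixes lg :: "'k::linordered_field \<Rightarrow> 'k"
    and Gs :: "nat \<Rightarrow> 'u::linordered_ab_group_add set"
    and L :: "'u \<Rightarrow> ('u,'k) ser"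
    and \<psi> :: "'u \<Rightarrow> 'u"
    and H :: "'u set"
  assumes log_k: "field_log lg"
    and tower: "EL_tower Gs L"
    and morph: "morphism (Gs 0) L \<psi>"
    and H_sub: "subgrp H" "H \<subseteq> Gs 0"
    and Comp_H: "\<forall>h\<in>H. (\<exists>g\<in>Gs 0. L h = smon g) \<longrightarrow> smon (\<psi> h) = L h"
  shows "\<forall>h\<in>H. (\<exists>g\<in>Gs 0. L h = smon g) \<longrightarrow> (\<forall>c::'k.
           psi_EL Gs L \<psi> (Exp lg Gs L (sscale c (smon h)))
             = Exp lg Gs L (sscale c (Log lg L (smon h)))
         \<and> (psi_EL Gs L \<psi> ` ELF Gs = ELF Gs \<longrightarrow>
             inv_into (ELF Gs) (psi_EL Gs L \<psi>) (Exp lg Gs L (sscale c (Log lg L (smon h))))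
               \<in> {smul (smon h') (Exp lg Gs L \<beta>) | h' \<beta>. h' \<in> H \<and> \<beta> \<in> Ser (pos_part H)}))"
proof (intro ballI impI allI conjI)
  fix h and c :: 'k assume hH: "h \<in> H" and L_h: "\<exists>g\<in>Gs 0. L h = smon g"
  have hG: "h \<in> Gs 0" using hH H_sub(2) by blast
  have "0 < h"
    using ser_embedding_pos[OF tower_embedding[OF tower] tower_zero[OF tower] hG] L_h spos_smon
    by metis
  define t where "t = sscale c (smon h)"
  have "h \<in> pos_part (Gs 0)" "h \<in> pos_part H" using hG hH \<open>0 < h\<close> by (auto simp: pos_part_def)
  then have t: "t \<in> Ser (pos_part (Gs 0))" "t \<in> Ser (pos_part H)"
    by (simp_all add: t_def sscale_smon_Ser)
  text \<open>By \<open>(Comp\<^sub>H)\<close>, \<open>k \<cdot> Log h = k \<cdot> l(h) = k \<cdot> \<psi>(h) = \<psi>(k \<cdot> h)\<close>.\<close>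
  have Log_t: "sscale c (Log lg L (smon h)) = smap (psi_sharp Gs L \<psi> 0) t"
    using Comp_H hH L_h unfolding t_def Log_smon[OF log_k] by (simp add: smap_sscale_smon)
  show "psi_EL Gs L \<psi> (Exp lg Gs L (sscale c (smon h))) = Exp lg Gs L (sscale c (Log lg L (smon h)))"
    using psi_EL_Exp(1)[OF tower morph log_k t(1)] unfolding Log_t t_def .
  have "inv_into (ELF Gs) (psi_EL Gs L \<psi>) (Exp lg Gs L (sscale c (Log lg L (smon h))))
          = smul (smon 0) (Exp lg Gs L t)"
    using psi_EL_Exp(2)[OF tower morph log_k t(1)] unfolding Log_t smul_smon0_left .
  then show "inv_into (ELF Gs) (psi_EL Gs L \<psi>) (Exp lg Gs L (sscale c (Log lg L (smon h))))
          \<in> {smul (smon h') (Exp lg Gs L \<beta>) | h' \<beta>. h' \<in> H \<and> \<beta> \<in> Ser (pos_part H)}"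
    using t(2) H_sub(1) unfolding subgrp_def by blast
qed

end
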